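(* Let $D_1,\dots,D_k$ be $n\times n$ doubly stochastic matrices and $\delta_1,\dots,\delta_k$ positive real numbers, and let $S_k(D)=\delta_1D_1+\cdots+\delta_kD_k$. Then for every $m\in\mathbb{N}$ and every block structure $\mathbb{B}\subseteq M_n(\mathbb{C})$, $\mu_{\mathbb{B}}(S_k(D)^m)=(\delta_1+\cdots+\delta_k)^m$.
   Context: A doubly stochastic matrix is a real matrix with nonnegative entries whose row sums and column sums all equal $1$. $\|M\|_2$ denotes the spectral norm. A block structure is a set of the form $\mathbb{B}=\{\operatorname{diag}(\delta_1I_{k_1},\dots,\delta_rI_{k_r},\Delta_1,\dots,\Delta_s)\mid \delta_i\in\mathbb{C},\ \Delta_j\in M_{n_j}(\mathbb{C})\}\subseteq M_n(\mathbb{C})$ for some $r,s\in\mathbb{N}_0$ and positive integers $k_i,n_j$ with $\sum k_i+\sum n_j=n$. The structured singular value is $\mu_{\mathbb{B}}(M)=0$ if $\det(I+M\Delta)\neq0$ for all $\Delta\in\mathbb{B}$, and otherwise $\mu_{\mathbb{B}}(M)=\big(\min\{\|\Delta\|_2\mid \Delta\in\mathbb{B},\ \det(I+M\Delta)=0\}\big)^{-1}$. *)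

theory Defs
  imports "HOL-Analysis.Analysis"
begin

(* Matrices are indexed by a finite, linearly ordered type 'n with CARD('n) = n.
   The position of index i in {0..<n} is its rank in the order. *)

definition idx_pos :: "'n::{finite,linorder} \<Rightarrow> nat" where
  "idx_pos i = card {j. j < i}"

primrec matpow :: "'a::semiring_1 ^'n::finite^'n \<Rightarrow> nat \<Rightarrow> 'a^'n^'n" where
  "matpow A 0 = mat 1"
| "matpow A (Suc m) = A ** matpow A m"

definition doubly_stochastic :: "real^'n::finite^'n \<Rightarrow> bool" where
  "doubly_stochastic A \<longleftrightarrow>
     (\<forall>i j. A $ i $ j \<ge> 0) \<and>
     (\<forall>i. (\<Sum>j\<in>UNIV. A $ i $ j) = 1) \<and>
     (\<forall>j. (\<Sum>i\<in>UNIV. A $ i $ j) = 1)"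

definition spec_norm :: "complex^'n::finite^'n \<Rightarrow> real" where
  "spec_norm A = onorm (\<lambda>x. A *v x)"

(* index of the block containing position p, for consecutive blocks of the given sizes *)
definition block_of :: "nat list \<Rightarrow> nat \<Rightarrow> nat" where
  "block_of sizes p = (LEAST b. p < sum_list (take (Suc b) sizes))"

(* the set diag(delta_1 I_{k_1},...,delta_r I_{k_r}, Delta_1,...,Delta_s):
   ks = [k_1,...,k_r] (repeated scalar blocks), ns = [n_1,...,n_s] (full blocks) *)
definition block_set :: "nat list \<Rightarrow> nat list \<Rightarrow> ((complex, 'n::{finite,linorder}) vec, 'n) vec set" where
  "block_set ks ns =
     {D. let blk = (\<lambda>i. block_of (ks @ ns) (idx_pos i)) in
         (\<forall>i j. blk i \<noteq> blk j \<longrightarrow> D $ i $ j = 0) \<and>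
         (\<exists>d :: nat \<Rightarrow> complex. \<forall>i j. blk i = blk j \<and> blk i < length ks \<longrightarrow>
              D $ i $ j = (if i = j then d (blk i) else 0))}"

definition is_block_structure :: "((complex, 'n::{finite,linorder}) vec, 'n) vec set \<Rightarrow> bool" where
  "is_block_structure B \<longleftrightarrow>
     (\<exists>ks ns. (\<forall>k\<in>set ks. k > 0) \<and> (\<forall>k\<in>set ns. k > 0) \<and>
              sum_list ks + sum_list ns = CARD('n) \<and> B = block_set ks ns)"

(* structured singular value; the minimum is written as Inf (it is attained) *)
definition ssv :: "(complex^'n::finite^'n) set \<Rightarrow> complex^'n^'n \<Rightarrow> real" where
  "ssv B M =
     (if \<forall>D\<in>B. det (mat 1 + M ** D) \<noteq> 0 then 0
      else inverse (Inf {spec_norm D | D. D \<in> B \<and> det (mat 1 + M ** D) = 0}))"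

end

theory Submission
  imports Defs
begin

text \<open>Write \<open>s = \<delta>\<^sub>1 + \<dots> + \<delta>\<^sub>k\<close>. The matrix \<open>S = \<Sum> \<delta>\<^sub>i D\<^sub>i\<close> is entrywise nonnegative
  with all row and column sums equal to \<open>s\<close>, so the Schur test gives \<open>\<parallel>S\<parallel>\<^sub>2 \<le> s\<close>, while the
  all-ones vector is an eigenvector of \<open>S\<close> for the eigenvalue \<open>s\<close>. Hence \<open>S\<^sup>m\<close> has an
  eigenvalue whose modulus \<open>s\<^sup>m\<close> equals its spectral norm. For any block structure
  \<open>\<rho>(M) \<le> \<mu>\<^sub>B(M) \<le> \<parallel>M\<parallel>\<^sub>2\<close>: a singular \<open>I + M\<Delta>\<close> forces \<open>\<parallel>M\<parallel>\<^sub>2 \<parallel>\<Delta>\<parallel>\<^sub>2 \<ge> 1\<close>, and every scalar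
  matrix, in particular \<open>-\<lambda>\<^sup>-\<^sup>1 I\<close> for an eigenvalue \<open>\<lambda>\<close>, lies in every block structure.\<close>

lemma norm_vec_power2: "(norm (x::complex^'n::finite))\<^sup>2 = (\<Sum>i\<in>UNIV. (norm (x$i))\<^sup>2)"
  unfolding norm_vec_def L2_set_def by (simp add: sum_nonneg)

lemma norm_vector_smult: "norm ((c::complex) *s (x::complex^'n::finite)) = norm c * norm x"
proof -
  have "(norm (c *s x))\<^sup>2 = (norm c * norm x)\<^sup>2"
    by (simp add: norm_vec_power2 power_mult_distrib norm_mult sum_distrib_left)
  then show ?thesis by (simp add: power2_eq_iff_nonneg)
qed

lemma mat_mult_vector: "mat c *v x = c *s (x::'a::semiring_1^'n::finite)"
  by (simp add: vec_eq_iff matrix_vector_mult_def mat_def if_distrib[of "\<lambda>t. t * _"] cong: if_cong)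

lemma weighted_sum_power2_le:
  fixes w y :: "'a \<Rightarrow> real"
  assumes "finite I" and "\<And>i. i \<in> I \<Longrightarrow> w i \<ge> 0"
  shows "(\<Sum>i\<in>I. w i * y i)\<^sup>2 \<le> (\<Sum>i\<in>I. w i) * (\<Sum>i\<in>I. w i * (y i)\<^sup>2)"
proof -
  have "(\<Sum>i\<in>I. w i * y i)\<^sup>2 = (\<Sum>i\<in>I. sqrt (w i) * (sqrt (w i) * y i))\<^sup>2"
    using assms(2) by (simp add: real_sqrt_mult[symmetric] mult.assoc[symmetric])
  also have "\<dots> \<le> (\<Sum>i\<in>I. (sqrt (w i))\<^sup>2) * (\<Sum>i\<in>I. (sqrt (w i) * y i)\<^sup>2)"
    by (rule Cauchy_Schwarz_ineq_sum)
  also have "\<dots> = (\<Sum>i\<in>I. w i) * (\<Sum>i\<in>I. w i * (y i)\<^sup>2)"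
    using assms(2) by (simp add: power_mult_distrib)
  finally show ?thesis .
qed

lemma norm_le_spec_norm: "norm (A *v x) \<le> spec_norm A * norm x"
  unfolding spec_norm_def by (rule onorm) simp

lemma spec_norm_nonneg: "spec_norm A \<ge> 0"
  unfolding spec_norm_def by (rule onorm_pos_le) simp

lemma spec_norm_mult_le: "spec_norm (A ** B) \<le> spec_norm A * spec_norm B"
proof -
  have "(\<lambda>x. (A ** B) *v x) = (\<lambda>x. A *v x) \<circ> (\<lambda>x. B *v x)"
    by (simp add: fun_eq_iff matrix_vector_mul_assoc)
  then show ?thesis
    unfolding spec_norm_def by (simp add: onorm_compose)
qed

lemma spec_norm_mat: "spec_norm (mat c :: complex^'n::finite^'n) = norm c"
proof (rule antisym)
  show "spec_norm (mat c :: complex^'n^'n) \<le> norm c"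
    unfolding spec_norm_def by (rule onorm_le) (simp add: mat_mult_vector norm_vector_smult)
  have "norm c * norm (1::complex^'n) = norm ((mat c :: complex^'n^'n) *v 1)"
    by (simp add: mat_mult_vector norm_vector_smult)
  also have "\<dots> \<le> spec_norm (mat c :: complex^'n^'n) * norm (1::complex^'n)"
    by (rule norm_le_spec_norm)
  finally show "norm c \<le> spec_norm (mat c :: complex^'n^'n)"
    by (simp add: zero_neq_one[symmetric])
qed

lemma spec_norm_matpow_le: "spec_norm (matpow A m) \<le> spec_norm A ^ m"
proof (induction m)
  case 0
  then show ?case by (simp add: spec_norm_mat)
next
  case (Suc m)
  have "spec_norm (matpow A (Suc m)) \<le> spec_norm A * spec_norm (matpow A m)"
    by (simp add: spec_norm_mult_le)
  also have "\<dots> \<le> spec_norm A * spec_norm A ^ m"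
    using Suc.IH by (simp add: mult_left_mono spec_norm_nonneg)
  finally show ?case by simp
qed

lemma spec_norm_le_row_col_sums:
  fixes A :: "complex^'n::finite^'n"
  assumes rows: "\<And>a. (\<Sum>b\<in>UNIV. norm (A$a$b)) \<le> s"
    and cols: "\<And>b. (\<Sum>a\<in>UNIV. norm (A$a$b)) \<le> s"
  shows "spec_norm A \<le> s"
  unfolding spec_norm_def
proof (rule onorm_le)
  fix x :: "complex^'n"
  have s0: "s \<ge> 0"
    by (rule order_trans[OF sum_nonneg rows]) simp
  have row_bound: "(norm ((A *v x) $ a))\<^sup>2 \<le> s * (\<Sum>b\<in>UNIV. norm (A$a$b) * (norm (x$b))\<^sup>2)" for a
  proof -
    have "norm ((A *v x) $ a) \<le> (\<Sum>b\<in>UNIV. norm (A$a$b) * norm (x$b))"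
      unfolding matrix_vector_mult_def by (simp add: norm_sum[THEN order_trans] norm_mult)
    then have "(norm ((A *v x) $ a))\<^sup>2 \<le> (\<Sum>b\<in>UNIV. norm (A$a$b) * norm (x$b))\<^sup>2"
      by (simp add: power_mono)
    also have "\<dots> \<le> (\<Sum>b\<in>UNIV. norm (A$a$b)) * (\<Sum>b\<in>UNIV. norm (A$a$b) * (norm (x$b))\<^sup>2)"
      by (rule weighted_sum_power2_le) simp_all
    also have "\<dots> \<le> s * (\<Sum>b\<in>UNIV. norm (A$a$b) * (norm (x$b))\<^sup>2)"
      by (intro mult_right_mono rows sum_nonneg) simp
    finally show ?thesis .
  qed
  have "(norm (A *v x))\<^sup>2 \<le> (\<Sum>a\<in>UNIV. s * (\<Sum>b\<in>UNIV. norm (A$a$b) * (norm (x$b))\<^sup>2))"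
    unfolding norm_vec_power2 by (rule sum_mono) (rule row_bound)
  also have "\<dots> = s * (\<Sum>b\<in>UNIV. (\<Sum>a\<in>UNIV. norm (A$a$b)) * (norm (x$b))\<^sup>2)"
    unfolding sum_distrib_left[symmetric] sum_distrib_right by (subst sum.swap) simp
  also have "\<dots> \<le> s * (\<Sum>b\<in>UNIV. s * (norm (x$b))\<^sup>2)"
    by (intro mult_left_mono sum_mono mult_right_mono cols s0) simp
  also have "\<dots> = (s * norm x)\<^sup>2"
    by (simp add: norm_vec_power2 power_mult_distrib sum_distrib_left power2_eq_square[of s] mult.assoc)
  finally show "norm (A *v x) \<le> s * norm x"
    by (rule power2_le_imp_le) (simp add: s0)
qed

lemma det_eq_0_iff_kernel:
  fixes A :: "complex^'n::finite^'n"
  shows "det A = 0 \<longleftrightarrow> (\<exists>x. x \<noteq> 0 \<and> A *v x = 0)"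
  using invertible_det_nz[of A] invertible_left_inverse[of A] matrix_left_invertible_ker[of A]
  by blast

lemma one_le_spec_norm_mult_if_singular:
  assumes "det (mat 1 + M ** \<Delta>) = 0"
  shows "1 \<le> spec_norm M * spec_norm \<Delta>"
proof -
  obtain x where "x \<noteq> 0" and "(mat 1 + M ** \<Delta>) *v x = 0"
    using assms det_eq_0_iff_kernel by blast
  then have "x = - (M *v (\<Delta> *v x))"
    by (simp add: matrix_vector_mult_add_rdistrib matrix_vector_mul_assoc add_eq_0_iff2)
  then have "norm x = norm (M *v (\<Delta> *v x))"
    by (metis norm_minus_cancel)
  also have "\<dots> \<le> spec_norm M * norm (\<Delta> *v x)"
    by (rule norm_le_spec_norm)
  also have "\<dots> \<le> spec_norm M * (spec_norm \<Delta> * norm x)"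
    by (intro mult_left_mono norm_le_spec_norm spec_norm_nonneg)
  finally show ?thesis
    using \<open>x \<noteq> 0\<close> by (simp add: mult.assoc)
qed

lemma mat_in_block_set: "mat c \<in> block_set ks ns"
  unfolding block_set_def Let_def by (auto simp: mat_def intro!: exI[of _ "\<lambda>_. c"])

lemma ssv_eq_norm_eigenvalue:
  fixes M :: "((complex, 'n::{finite,linorder}) vec, 'n) vec"
  assumes "is_block_structure B"
    and "v \<noteq> 0" "M *v v = c *s v" "c \<noteq> 0"
    and "spec_norm M \<le> norm c"
  shows "ssv B M = norm c"
proof -
  define \<Delta>\<^sub>0 where "\<Delta>\<^sub>0 = (mat (- inverse c) :: ((complex, 'n) vec, 'n) vec)"
  let ?singular = "{spec_norm \<Delta> | \<Delta>. \<Delta> \<in> B \<and> det (mat 1 + M ** \<Delta>) = 0}"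
  have "\<Delta>\<^sub>0 \<in> B"
    using assms(1) mat_in_block_set unfolding is_block_structure_def \<Delta>\<^sub>0_def by blast
  moreover have "det (mat 1 + M ** \<Delta>\<^sub>0) = 0"
  proof -
    have "M *v (\<Delta>\<^sub>0 *v v) = - inverse c *s (c *s v)"
      by (simp only: \<Delta>\<^sub>0_def mat_mult_vector vector_scalar_commute assms(3))
    also have "\<dots> = - v"
      using assms(4) by (simp add: vector_smult_assoc)
    finally have "M *v (\<Delta>\<^sub>0 *v v) = - v" .
    then have "(mat 1 + M ** \<Delta>\<^sub>0) *v v = 0"
      by (simp add: matrix_vector_mult_add_rdistrib matrix_vector_mul_assoc)
    then show ?thesis
      using assms(2) det_eq_0_iff_kernel by blast
  qed
  moreover have "spec_norm \<Delta>\<^sub>0 = inverse (norm c)"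
    by (simp add: \<Delta>\<^sub>0_def spec_norm_mat norm_inverse)
  ultimately have "inverse (norm c) \<in> ?singular"
    by (auto intro!: exI[of _ \<Delta>\<^sub>0])
  moreover have "inverse (norm c) \<le> y" if "y \<in> ?singular" for y
  proof -
    obtain \<Delta> where "y = spec_norm \<Delta>" and "det (mat 1 + M ** \<Delta>) = 0"
      using \<open>y \<in> ?singular\<close> by blast
    moreover have "1 \<le> spec_norm M * spec_norm \<Delta>"
      using \<open>det (mat 1 + M ** \<Delta>) = 0\<close> by (rule one_le_spec_norm_mult_if_singular)
    moreover have "spec_norm M * spec_norm \<Delta> \<le> norm c * spec_norm \<Delta>"
      by (intro mult_right_mono assms(5) spec_norm_nonneg)
    ultimately have "1 \<le> norm c * y"
      by simp
    then show ?thesis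
      using assms(4) by (simp add: field_simps)
  qed
  ultimately have "Inf ?singular = inverse (norm c)"
    by (intro cInf_eq_minimum)
  then show ?thesis
    unfolding ssv_def using \<open>inverse (norm c) \<in> ?singular\<close> by auto
qed

lemma matpow_eigenvector:
  fixes A :: "'a::field^'n::finite^'n"
  assumes "A *v v = c *s v"
  shows "matpow A m *v v = c ^ m *s v"
proof (induction m)
  case 0
  then show ?case by simp
next
  case (Suc m)
  have "matpow A (Suc m) *v v = A *v (c ^ m *s v)"
    by (simp add: Suc.IH flip: matrix_vector_mul_assoc)
  also have "\<dots> = c ^ m *s (c *s v)"
    by (simp add: assms vector_scalar_commute)
  also have "\<dots> = c ^ Suc m *s v"
    by (simp only: vector_smult_assoc power_Suc2)
  finally show ?case .
qed

definition scaled_doubly_stochastic :: "real \<Rightarrow> real^'n::finite^'n \<Rightarrow> bool" where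
  "scaled_doubly_stochastic s A \<longleftrightarrow>
     (\<forall>i j. A $ i $ j \<ge> 0) \<and>
     (\<forall>i. (\<Sum>j\<in>UNIV. A $ i $ j) = s) \<and>
     (\<forall>j. (\<Sum>i\<in>UNIV. A $ i $ j) = s)"

lemma scaled_doubly_stochastic_sum:
  assumes "finite I"
    and "\<And>i. i \<in> I \<Longrightarrow> doubly_stochastic (D i)"
    and "\<And>i. i \<in> I \<Longrightarrow> \<delta> i \<ge> 0"
  shows "scaled_doubly_stochastic (\<Sum>i\<in>I. \<delta> i) (\<Sum>i\<in>I. \<delta> i *\<^sub>R D i)"
proof -
  have row_sums: "(\<Sum>j\<in>UNIV. D i $ a $ j) = 1" and col_sums: "(\<Sum>j\<in>UNIV. D i $ j $ a) = 1"
    if "i \<in> I" for i a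
    using assms(2)[OF that] unfolding doubly_stochastic_def by blast+
  have "(\<Sum>j\<in>UNIV. \<Sum>i\<in>I. \<delta> i * D i $ a $ j) = (\<Sum>i\<in>I. \<delta> i)" for a
    by (subst sum.swap) (simp add: row_sums flip: sum_distrib_left)
  moreover have "(\<Sum>j\<in>UNIV. \<Sum>i\<in>I. \<delta> i * D i $ j $ a) = (\<Sum>i\<in>I. \<delta> i)" for a
    by (subst sum.swap) (simp add: col_sums flip: sum_distrib_left)
  moreover have "D i $ a $ b \<ge> 0" if "i \<in> I" for i a b
    using assms(2)[OF that] unfolding doubly_stochastic_def by blast
  ultimately show ?thesis
    unfolding scaled_doubly_stochastic_def using assms(1,3) by (auto intro!: sum_nonneg)
qed

definition of_real_matrix :: "real^'n::finite^'m::finite \<Rightarrow> complex^'n^'m" where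
  "of_real_matrix A = (\<chi> a b. complex_of_real (A $ a $ b))"

lemma spec_norm_of_real_matrix_le:
  "scaled_doubly_stochastic s A \<Longrightarrow> spec_norm (of_real_matrix A) \<le> s"
  unfolding scaled_doubly_stochastic_def of_real_matrix_def
  by (intro spec_norm_le_row_col_sums) simp_all

lemma of_real_matrix_mult_ones:
  "scaled_doubly_stochastic s A \<Longrightarrow> of_real_matrix A *v 1 = complex_of_real s *s 1"
  unfolding scaled_doubly_stochastic_def of_real_matrix_def
  by (simp add: vec_eq_iff matrix_vector_mult_def flip: of_real_sum)

theorem corollary2p2:
  fixes D :: "nat \<Rightarrow> ((real, 'n::{finite,linorder}) vec, 'n) vec"
    and \<delta> :: "nat \<Rightarrow> real"
    and k m :: nat
    and B :: "((complex, 'n) vec, 'n) vec set"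
  assumes "k \<ge> 1"
    and "\<And>i. i < k \<Longrightarrow> doubly_stochastic (D i)"
    and "\<And>i. i < k \<Longrightarrow> \<delta> i > 0"
    and "is_block_structure B"
  shows "ssv B (matpow (\<chi> a b. complex_of_real (\<Sum>i<k. \<delta> i * D i $ a $ b)) m)
         = (\<Sum>i<k. \<delta> i) ^ m"
proof -
  define s where "s = (\<Sum>i<k. \<delta> i)"
  define S where "S = of_real_matrix (\<Sum>i<k. \<delta> i *\<^sub>R D i)"
  have S_eq: "(\<chi> a b. complex_of_real (\<Sum>i<k. \<delta> i * D i $ a $ b)) = S"
    by (simp add: S_def of_real_matrix_def)
  have "scaled_doubly_stochastic s (\<Sum>i<k. \<delta> i *\<^sub>R D i)"
    unfolding s_def using assms(2,3) by (intro scaled_doubly_stochastic_sum) (auto simp: less_imp_le)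
  then have "S *v 1 = complex_of_real s *s 1" and "spec_norm S \<le> s"
    unfolding S_def by (simp_all add: of_real_matrix_mult_ones spec_norm_of_real_matrix_le)
  have "s > 0"
    unfolding s_def using assms(1,3) by (intro sum_pos) (auto simp: lessThan_empty_iff)
  have "matpow S m *v 1 = complex_of_real (s ^ m) *s 1"
    using matpow_eigenvector[OF \<open>S *v 1 = _\<close>] by simp
  moreover have "spec_norm (matpow S m) \<le> s ^ m"
    by (rule order_trans[OF spec_norm_matpow_le power_mono])
      (simp_all add: \<open>spec_norm S \<le> s\<close> spec_norm_nonneg)
  ultimately have "ssv B (matpow S m) = norm (complex_of_real (s ^ m))"
    using assms(4) \<open>s > 0\<close>
    by (intro ssv_eq_norm_eigenvalue) (simp_all add: norm_power zero_neq_one[symmetric])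
  then show ?thesis
    unfolding S_eq using \<open>s > 0\<close> by (simp add: norm_power flip: s_def)
qed

end
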